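(* Let $g\ge0$, $n\ge1$ be integers and $\mathcal{A}\in\mathcal{D}_{g,n}$ a weight datum. Let $\mathcal{A}_1,\dots,\mathcal{A}_{N-1},\mathcal{A}_N=\mathcal{A}$ be weight data lying in chambers $Ch_{\mathcal{A}_p}\ni\mathcal{A}_p$ such that $$[Ch_{\mathcal{A}_1}]\leq [Ch_{\mathcal{A}_2}]\leq \dots\leq [Ch_{\mathcal{A}_{N-1}}]\leq [Ch_{\mathcal{A}}].$$ Then this sequence induces a filtration of chain complexes $$G^{(g,\mathcal{A}_1)}\hookrightarrow G^{(g,\mathcal{A}_2)}\hookrightarrow \dots\hookrightarrow G^{(g,\mathcal{A}_{N-1})}\hookrightarrow G^{(g,\mathcal{A})},$$ where each $G^{(g,\mathcal{A}_{p-1})}\hookrightarrow G^{(g,\mathcal{A}_p)}$, $p=2,\dots,N$, is an injective map of chain complexes.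
   Context: A weight datum is $\mathcal{A}=(a_1,\dots,a_n)$ with $a_i\in\mathbb{Q}\cap(0,1]$ and $2g-2+\sum_i a_i>0$; $\mathcal{D}_{g,n}\subset\mathbb{R}^n$ is the set of weight data. For $S\subseteq\{1,\dots,n\}$ with $2\le|S|\le n$ if $g\ge1$ (resp. $2\le|S|\le n-2$ if $g=0$), the wall $w_S$ is the locus $\sum_{i\in S}a_i=1$. Chambers are the connected components of the complement in $\mathcal{D}_{g,n}$ of all walls; each is determined by the direction ($<1$ or $>1$) of $\sum_{i\in S}a_i$ for each such $S$. Chambers are partially ordered by $Ch_1\le Ch_2$ iff for every such $S$, $\sum_{i\in S}a_i>1$ on $Ch_1$ implies $\sum_{i\in S}b_i>1$ on $Ch_2$. $S_n$ acts by permuting coordinates; $[Ch]$ is the $S_n$-orbit of a chamber, and $[Ch_1]\le[Ch_2]$ iff there are $Ch_1'\in[Ch_1]$, $Ch_2'\in[Ch_2]$ with $Ch_1'\le Ch_2'$. A $(g,\mathcal{A})$-stable graph is a finite connected graph $G$ (loops and multiple edges allowed) with vertex weight $w:V(G)\to\mathbb{Z}_{\ge0}$ and $n$ legs labelled $1,\dots,n$ attached via $m:\{1,\dots,n\}\to V(G)$, with $b_1(G)+\sum_v w(v)=g$ and $2w(v)-2+|v|_E+|v|_{\mathcal{A}}>0$ for every vertex $v$, where $|v|_E$ is the number of edge half-edges at $v$ (loops counted twice) and $|v|_{\mathcal{A}}=\sum_{m(i)=v}a_i$. The graph complex $G^{(g,\mathcal{A})}$ is the chain complex of rational vector spaces generated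 by pairs $[\mathbf{G},\omega]$, with $\mathbf{G}$ a $(g,\mathcal{A})$-stable graph and $\omega$ a total order of its edges, subject to $[\mathbf{G},\omega]=\mathrm{sgn}(\sigma)[\mathbf{G}',\omega']$ whenever there is an isomorphism of $n$-marked weighted graphs $\mathbf{G}\cong\mathbf{G}'$ under which $\omega,\omega'$ differ by $\sigma\in S_{|E(\mathbf{G})|}$; it is graded by the number of edges, with differential the signed sum of the contractions of the non-loop edges. *)

theory Defs
  imports Complex_Main "HOL-Combinatorics.Permutations"
begin

text \<open>A weight datum for n legs is a list A of rationals of length n; leg i+1 of the
paper corresponds to list index i.\<close>

definition weight_datum :: "nat \<Rightarrow> rat list \<Rightarrow> bool" where
  "weight_datum g A \<longleftrightarrow>
     (\<forall>i<length A. 0 < A ! i \<and> A ! i \<le> 1) \<and> 2 * of_nat g - 2 + sum_list A > 0"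

definition wall_set :: "nat \<Rightarrow> nat \<Rightarrow> nat set \<Rightarrow> bool" where
  "wall_set g n S \<longleftrightarrow> S \<subseteq> {..<n} \<and> 2 \<le> card S \<and> (g = 0 \<longrightarrow> card S + 2 \<le> n)"

definition wsum :: "rat list \<Rightarrow> nat set \<Rightarrow> rat" where
  "wsum A S = (\<Sum>i\<in>S. A ! i)"

definition in_chamber :: "nat \<Rightarrow> rat list \<Rightarrow> bool" where
  "in_chamber g A \<longleftrightarrow> weight_datum g A \<and>
     (\<forall>S. wall_set g (length A) S \<longrightarrow> wsum A S \<noteq> 1)"

text \<open>Ch_A \<le> Ch_B (chambers containing A, B), evaluated at the points.\<close>
definition chamber_le :: "nat \<Rightarrow> rat list \<Rightarrow> rat list \<Rightarrow> bool" where
  "chamber_le g A B \<longleftrightarrow>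
     (\<forall>S. wall_set g (length A) S \<longrightarrow> wsum A S > 1 \<longrightarrow> wsum B S > 1)"

text \<open>[Ch_A] \<le> [Ch_B]: some S_n-translates are comparable.\<close>
definition orbit_le :: "nat \<Rightarrow> rat list \<Rightarrow> rat list \<Rightarrow> bool" where
  "orbit_le g A B \<longleftrightarrow>
     (\<exists>\<sigma>1 \<sigma>2. \<sigma>1 permutes {..<length A} \<and> \<sigma>2 permutes {..<length B} \<and>
        chamber_le g (permute_list \<sigma>1 A) (permute_list \<sigma>2 B))"

text \<open>Vertices are 0..<length wt (with genus weights wt); edges are the list edg
(unordered pairs of endpoints; the list order is the edge order \<omega>); leg i is attached
at vertex leg ! i.\<close>
record sgraph =
  wt  :: "nat list"
  edg :: "(nat \<times> nat) list"
  leg :: "nat list"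

definition nverts :: "sgraph \<Rightarrow> nat" where "nverts G = length (wt G)"
definition nedges :: "sgraph \<Rightarrow> nat" where "nedges G = length (edg G)"

definition adjacent :: "sgraph \<Rightarrow> nat \<Rightarrow> nat \<Rightarrow> bool" where
  "adjacent G u v \<longleftrightarrow> (\<exists>j<nedges G. edg G ! j = (u, v) \<or> edg G ! j = (v, u))"

definition connected_sg :: "sgraph \<Rightarrow> bool" where
  "connected_sg G \<longleftrightarrow> (\<forall>u<nverts G. \<forall>v<nverts G. (adjacent G)\<^sup>*\<^sup>* u v)"

definition betti1 :: "sgraph \<Rightarrow> nat" where
  "betti1 G = nedges G + 1 - nverts G"

text \<open>Number of edge half-edges at v (loops counted twice).\<close>
definition edge_valence :: "sgraph \<Rightarrow> nat \<Rightarrow> nat" where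
  "edge_valence G v = (\<Sum>j<nedges G.
      (if fst (edg G ! j) = v then 1 else 0) + (if snd (edg G ! j) = v then 1 else 0))"

definition leg_weight :: "rat list \<Rightarrow> sgraph \<Rightarrow> nat \<Rightarrow> rat" where
  "leg_weight A G v = (\<Sum>i<length A. if leg G ! i = v then A ! i else 0)"

definition stable_graph :: "nat \<Rightarrow> rat list \<Rightarrow> sgraph \<Rightarrow> bool" where
  "stable_graph g A G \<longleftrightarrow>
     1 \<le> nverts G \<and> length (leg G) = length A \<and>
     (\<forall>i<length A. leg G ! i < nverts G) \<and>
     (\<forall>j<nedges G. fst (edg G ! j) < nverts G \<and> snd (edg G ! j) < nverts G) \<and>
     connected_sg G \<and> betti1 G + sum_list (wt G) = g \<and>
     (\<forall>v<nverts G. 2 * of_nat (wt G ! v) - 2 + of_nat (edge_valence G v)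
                     + leg_weight A G v > (0::rat))"

text \<open>Isomorphism of n-marked weighted graphs G \<cong> H whose edge bijection,
read through the edge orders, is the permutation \<sigma> (edge j of G goes to edge \<sigma> j of H).\<close>
definition sg_iso :: "sgraph \<Rightarrow> sgraph \<Rightarrow> (nat \<Rightarrow> nat) \<Rightarrow> bool" where
  "sg_iso G H \<sigma> \<longleftrightarrow>
     nverts H = nverts G \<and> nedges H = nedges G \<and> length (leg H) = length (leg G) \<and>
     \<sigma> permutes {..<nedges G} \<and>
     (\<exists>\<pi>. \<pi> permutes {..<nverts G} \<and>
        (\<forall>v<nverts G. wt H ! \<pi> v = wt G ! v) \<and>
        (\<forall>j<nedges G. edg H ! \<sigma> j = (\<pi> (fst (edg G ! j)), \<pi> (snd (edg G ! j))) \<or>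
                      edg H ! \<sigma> j = (\<pi> (snd (edg G ! j)), \<pi> (fst (edg G ! j)))) \<and>
        (\<forall>i<length (leg G). leg H ! i = \<pi> (leg G ! i)))"

text \<open>The free Q-vector space on ordered stable graphs: finitely supported functions.\<close>
definition free_space :: "nat \<Rightarrow> rat list \<Rightarrow> (sgraph \<Rightarrow> rat) set" where
  "free_space g A = {f. finite {x. f x \<noteq> 0} \<and> (\<forall>x. f x \<noteq> 0 \<longrightarrow> stable_graph g A x)}"

definition delta :: "sgraph \<Rightarrow> sgraph \<Rightarrow> rat" where
  "delta x = (\<lambda>y. if y = x then 1 else 0)"

text \<open>The subspace spanned by the relations [G,\<omega>] - sgn(\<sigma>)[G',\<omega>'];
G^(g,A) is free_space g A modulo rel_space g A.\<close>
inductive_set rel_space :: "nat \<Rightarrow> rat list \<Rightarrow> (sgraph \<Rightarrow> rat) set" for g A where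
  zero: "(\<lambda>_. 0) \<in> rel_space g A"
| step: "\<lbrakk> f \<in> rel_space g A; stable_graph g A x; stable_graph g A y; sg_iso x y \<sigma> \<rbrakk>
         \<Longrightarrow> (\<lambda>z. f z + c * (delta x z - of_int (sign \<sigma>) * delta y z)) \<in> rel_space g A"

text \<open>Contraction of the non-loop edge j: its larger endpoint is merged into the smaller
one, vertices above it are renumbered down, the edge is removed from the order.\<close>
definition contract :: "sgraph \<Rightarrow> nat \<Rightarrow> sgraph" where
  "contract G j =
     (let a = fst (edg G ! j); b = snd (edg G ! j); lo = min a b; hi = max a b;
          ren = (\<lambda>v. if v = hi then lo else if hi < v then v - 1 else v);
          w = (wt G)[lo := wt G ! lo + wt G ! hi]
      in \<lparr> wt = take hi w @ drop (Suc hi) w,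
           edg = map (\<lambda>(u, v). (ren u, ren v)) (take j (edg G) @ drop (Suc j) (edg G)),
           leg = map ren (leg G) \<rparr>)"

definition diff :: "(sgraph \<Rightarrow> rat) \<Rightarrow> (sgraph \<Rightarrow> rat)" where
  "diff f = (\<lambda>y. \<Sum>x\<in>{x. f x \<noteq> 0}. f x *
      (\<Sum>j\<in>{j. j < nedges x \<and> fst (edg x ! j) \<noteq> snd (edg x ! j) \<and> contract x j = y}.
          (-1) ^ j))"

definition push :: "(sgraph \<Rightarrow> sgraph) \<Rightarrow> (sgraph \<Rightarrow> rat) \<Rightarrow> (sgraph \<Rightarrow> rat)" where
  "push h f = (\<lambda>y. \<Sum>x\<in>{x. f x \<noteq> 0 \<and> h x = y}. f x)"

definition relabel :: "(nat \<Rightarrow> nat) \<Rightarrow> sgraph \<Rightarrow> sgraph" where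
  "relabel \<tau> G = G\<lparr>leg := permute_list \<tau> (leg G)\<rparr>"

text \<open>The map [G,\<omega>] \<mapsto> [h G,\<omega>] is a well-defined injective chain map
G^(g,A) \<rightarrow> G^(g,B).\<close>
definition injective_chain_map :: "nat \<Rightarrow> rat list \<Rightarrow> rat list \<Rightarrow> (sgraph \<Rightarrow> sgraph) \<Rightarrow> bool" where
  "injective_chain_map g A B h \<longleftrightarrow>
     (\<forall>G. stable_graph g A G \<longrightarrow> stable_graph g B (h G) \<and> nedges (h G) = nedges G) \<and>
     (\<forall>f\<in>free_space g A. f \<in> rel_space g A \<longrightarrow> push h f \<in> rel_space g B) \<and>
     (\<forall>f\<in>free_space g A. (\<lambda>y. push h (diff f) y - diff (push h f) y) \<in> rel_space g B) \<and>
     (\<forall>f\<in>free_space g A. push h f \<in> rel_space g B \<longrightarrow> f \<in> rel_space g A)"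

end

theory Submission
  imports Defs
begin

text \<open>Relabelling the legs by a permutation \<open>\<tau>\<close> is a bijection on graphs with \<open>n\<close> legs that
commutes with edge contraction and with isomorphisms, so it induces an injective chain map
\<open>G^(g,A) \<rightarrow> G^(g,B)\<close> as soon as it sends \<open>(g,A)\<close>-stable graphs to \<open>(g,B)\<close>-stable graphs.
The hypothesis \<open>[Ch\<^sub>A] \<le> [Ch\<^sub>B]\<close> yields a permutation \<open>\<rho>\<close> with \<open>Ch\<^sub>A \<le> Ch\<^sub>\<rho>\<^sub>B\<close>, and stability
is monotone in the chamber: at a vertex with \<open>c = 2w - 2 + valence\<close> the condition
\<open>c + (weight of the legs at v) > 0\<close> is automatic for \<open>c \<ge> 1\<close>, needs one leg for \<open>c = 0\<close>,
says for \<open>c = -1\<close> that the legs at \<open>v\<close> have total weight \<open>> 1\<close>, which survives passing to a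
larger chamber, and for \<open>c = -2\<close> concerns the genus-0 graph with a single vertex carrying all
legs, which is stable for every weight datum.\<close>

lemma relabel_simps [simp]:
  "wt (relabel \<tau> G) = wt G" "edg (relabel \<tau> G) = edg G"
  "leg (relabel \<tau> G) = permute_list \<tau> (leg G)"
  by (simp_all add: relabel_def)

lemma relabel_invariants [simp]:
  "nverts (relabel \<tau> G) = nverts G" "nedges (relabel \<tau> G) = nedges G"
  "edge_valence (relabel \<tau> G) = edge_valence G" "connected_sg (relabel \<tau> G) = connected_sg G"
  "betti1 (relabel \<tau> G) = betti1 G"
  by (simp_all add: nverts_def nedges_def adjacent_def[abs_def] connected_sg_def betti1_def
      edge_valence_def[abs_def])

lemma length_leg_contract [simp]: "length (leg (contract G j)) = length (leg G)"
  by (simp add: contract_def Let_def)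

lemma relabel_inv_relabel:
  assumes "\<tau> permutes {..<n}" "length (leg G) = n"
  shows "relabel (inv \<tau>) (relabel \<tau> G) = G"
proof -
  have "permute_list (inv \<tau>) (permute_list \<tau> (leg G)) = permute_list (\<tau> \<circ> inv \<tau>) (leg G)"
    using permute_list_compose[of "inv \<tau>" "leg G" \<tau>] permutes_inv[OF assms(1)] assms(2) by simp
  then show ?thesis
    by (simp add: relabel_def permutes_inv_o(1)[OF assms(1)])
qed

lemma relabel_relabel_inv:
  assumes "\<tau> permutes {..<n}" "length (leg G) = n"
  shows "relabel \<tau> (relabel (inv \<tau>) G) = G"
  using relabel_inv_relabel[OF permutes_inv[OF assms(1)] assms(2)] permutes_inv_inv[OF assms(1)]
  by simp

lemma relabel_eq_iff:
  assumes "\<tau> permutes {..<n}" "length (leg G) = n"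
  shows "relabel \<tau> G = H \<longleftrightarrow> length (leg H) = n \<and> G = relabel (inv \<tau>) H"
proof
  assume "relabel \<tau> G = H"
  then show "length (leg H) = n \<and> G = relabel (inv \<tau>) H"
    using assms relabel_inv_relabel[OF assms] by auto
next
  assume "length (leg H) = n \<and> G = relabel (inv \<tau>) H"
  then show "relabel \<tau> G = H" using relabel_relabel_inv[OF assms(1)] by simp
qed

lemma contract_relabel:
  assumes "\<tau> permutes {..<n}" "length (leg G) = n"
  shows "contract (relabel \<tau> G) j = relabel \<tau> (contract G j)"
  using assms by (simp add: contract_def Let_def relabel_def permute_list_map)

definition sg_iso_by :: "sgraph \<Rightarrow> sgraph \<Rightarrow> (nat \<Rightarrow> nat) \<Rightarrow> (nat \<Rightarrow> nat) \<Rightarrow> bool" where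
  "sg_iso_by G H \<sigma> \<pi> \<longleftrightarrow>
     nverts H = nverts G \<and> nedges H = nedges G \<and> length (leg H) = length (leg G) \<and>
     \<sigma> permutes {..<nedges G} \<and> \<pi> permutes {..<nverts G} \<and>
     (\<forall>v<nverts G. wt H ! \<pi> v = wt G ! v) \<and>
     (\<forall>j<nedges G. edg H ! \<sigma> j = (\<pi> (fst (edg G ! j)), \<pi> (snd (edg G ! j))) \<or>
                   edg H ! \<sigma> j = (\<pi> (snd (edg G ! j)), \<pi> (fst (edg G ! j)))) \<and>
     (\<forall>i<length (leg G). leg H ! i = \<pi> (leg G ! i))"

lemma sg_iso_iff_by: "sg_iso G H \<sigma> \<longleftrightarrow> (\<exists>\<pi>. sg_iso_by G H \<sigma> \<pi>)"
  unfolding sg_iso_def sg_iso_by_def by blast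

lemma sg_iso_by_inv:
  assumes "sg_iso_by G H \<sigma> \<pi>"
  shows "sg_iso_by H G (inv \<sigma>) (inv \<pi>)"
proof -
  note iso = assms[unfolded sg_iso_by_def]
  have sizes: "nverts H = nverts G" "nedges H = nedges G" "length (leg H) = length (leg G)"
    using iso by auto
  have \<sigma>: "\<sigma> permutes {..<nedges G}" and \<pi>: "\<pi> permutes {..<nverts G}" using iso by auto
  have wt: "wt G ! inv \<pi> v = wt H ! v" if "v < nverts G" for v
  proof -
    have "inv \<pi> v < nverts G" using that permutes_in_image[OF permutes_inv[OF \<pi>]] by simp
    then have "wt H ! \<pi> (inv \<pi> v) = wt G ! inv \<pi> v" using iso by blast
    then show ?thesis using permutes_inverses(1)[OF \<pi>] by simp
  qed
  have edg: "edg G ! inv \<sigma> j = (inv \<pi> (fst (edg H ! j)), inv \<pi> (snd (edg H ! j))) \<or>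
             edg G ! inv \<sigma> j = (inv \<pi> (snd (edg H ! j)), inv \<pi> (fst (edg H ! j)))"
    if "j < nedges G" for j
  proof -
    have "inv \<sigma> j < nedges G" using that permutes_in_image[OF permutes_inv[OF \<sigma>]] by simp
    then have "edg H ! \<sigma> (inv \<sigma> j) = (\<pi> (fst (edg G ! inv \<sigma> j)), \<pi> (snd (edg G ! inv \<sigma> j))) \<or>
               edg H ! \<sigma> (inv \<sigma> j) = (\<pi> (snd (edg G ! inv \<sigma> j)), \<pi> (fst (edg G ! inv \<sigma> j)))"
      using iso by blast
    then show ?thesis
      using permutes_inverses[OF \<pi>] permutes_inverses(1)[OF \<sigma>]
      by (cases "edg G ! inv \<sigma> j") auto
  qed
  have leg: "leg G ! i = inv \<pi> (leg H ! i)" if "i < length (leg G)" for i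
    using that iso permutes_inverses(2)[OF \<pi>] by simp
  show ?thesis
    unfolding sg_iso_by_def sizes
    using wt edg leg permutes_inv[OF \<sigma>] permutes_inv[OF \<pi>] by simp
qed

lemma sg_iso_sym: "sg_iso G H \<sigma> \<Longrightarrow> sg_iso H G (inv \<sigma>)"
  using sg_iso_by_inv sg_iso_iff_by by metis

lemma sg_iso_relabel:
  assumes "sg_iso G H \<sigma>" "\<tau> permutes {..<n}" "length (leg G) = n"
  shows "sg_iso (relabel \<tau> G) (relabel \<tau> H) \<sigma>"
proof -
  obtain \<pi> where iso: "sg_iso_by G H \<sigma> \<pi>" using assms(1) sg_iso_iff_by by blast
  then have "permute_list \<tau> (leg H) ! i = \<pi> (permute_list \<tau> (leg G) ! i)"
    if "i < length (leg G)" for i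
    using that assms(2,3) permutes_in_image[OF assms(2)]
    by (simp add: permute_list_nth sg_iso_by_def)
  with iso have "sg_iso_by (relabel \<tau> G) (relabel \<tau> H) \<sigma> \<pi>"
    unfolding sg_iso_by_def by simp
  then show ?thesis using sg_iso_iff_by by blast
qed

lemma sg_iso_by_vertex_surj:
  assumes "sg_iso_by G H \<sigma> \<pi>" "v < nverts H"
  obtains u where "u < nverts G" "v = \<pi> u"
proof
  have \<pi>: "\<pi> permutes {..<nverts G}" using assms(1) by (simp add: sg_iso_by_def)
  show "inv \<pi> v < nverts G"
    using assms permutes_in_image[OF permutes_inv[OF \<pi>]] by (simp add: sg_iso_by_def)
  show "v = \<pi> (inv \<pi> v)" using permutes_inverses(1)[OF \<pi>] by simp
qed

lemma sg_iso_by_adjacent: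
  assumes "sg_iso_by G H \<sigma> \<pi>" "adjacent G u v"
  shows "adjacent H (\<pi> u) (\<pi> v)"
proof -
  obtain j where j: "j < nedges G" "edg G ! j = (u, v) \<or> edg G ! j = (v, u)"
    using assms(2) unfolding adjacent_def by blast
  have "\<sigma> permutes {..<nedges G}" "nedges H = nedges G"
    using assms(1) by (simp_all add: sg_iso_by_def)
  then have "\<sigma> j < nedges H" using j(1) permutes_in_image by fastforce
  moreover have "edg H ! \<sigma> j = (\<pi> u, \<pi> v) \<or> edg H ! \<sigma> j = (\<pi> v, \<pi> u)"
    using assms(1) j unfolding sg_iso_by_def by auto
  ultimately show ?thesis unfolding adjacent_def by blast
qed

lemma sg_iso_by_connected:
  assumes iso: "sg_iso_by G H \<sigma> \<pi>" and conn: "connected_sg G"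
  shows "connected_sg H"
  unfolding connected_sg_def
proof (intro allI impI)
  fix u v assume "u < nverts H" "v < nverts H"
  then obtain u' v' where "u' < nverts G" "v' < nverts G" "u = \<pi> u'" "v = \<pi> v'"
    using sg_iso_by_vertex_surj[OF iso] by metis
  moreover have "(adjacent H)\<^sup>*\<^sup>* (\<pi> a) (\<pi> b)" if "(adjacent G)\<^sup>*\<^sup>* a b" for a b
    using that by induction (auto intro: rtranclp.rtrancl_into_rtrancl sg_iso_by_adjacent[OF iso])
  ultimately show "(adjacent H)\<^sup>*\<^sup>* u v" using conn unfolding connected_sg_def by blast
qed

lemma sg_iso_by_sum_wt:
  assumes "sg_iso_by G H \<sigma> \<pi>"
  shows "sum_list (wt H) = sum_list (wt G)"
proof -
  note iso = assms[unfolded sg_iso_by_def]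
  have "sum_list (wt H) = (\<Sum>v<nverts G. wt H ! v)"
    using iso by (simp add: sum_list_sum_nth nverts_def atLeast0LessThan)
  also have "\<dots> = (\<Sum>v<nverts G. wt H ! \<pi> v)"
    using sum.permute[of \<pi> "{..<nverts G}" "\<lambda>v. wt H ! v"] iso by simp
  also have "\<dots> = sum_list (wt G)"
    using iso by (simp add: sum_list_sum_nth nverts_def atLeast0LessThan)
  finally show ?thesis .
qed

lemma sg_iso_by_edge_valence:
  assumes "sg_iso_by G H \<sigma> \<pi>"
  shows "edge_valence H (\<pi> u) = edge_valence G u"
proof -
  note iso = assms[unfolded sg_iso_by_def]
  define ends :: "nat \<times> nat \<Rightarrow> nat \<Rightarrow> nat" where
    "ends e v = (if fst e = v then 1 else 0) + (if snd e = v then 1 else 0)" for e v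
  have \<pi>_eq: "\<pi> a = \<pi> b \<longleftrightarrow> a = b" for a b
    using permutes_inj[of \<pi>] iso by (auto dest: injD)
  have "edge_valence H (\<pi> u) = (\<Sum>j<nedges G. ends (edg H ! j) (\<pi> u))"
    using iso by (simp add: edge_valence_def ends_def)
  also have "\<dots> = (\<Sum>j<nedges G. ends (edg H ! \<sigma> j) (\<pi> u))"
    using sum.permute[of \<sigma> "{..<nedges G}" "\<lambda>j. ends (edg H ! j) (\<pi> u)"] iso by simp
  also have "\<dots> = (\<Sum>j<nedges G. ends (edg G ! j) u)"
    using iso by (intro sum.cong refl) (auto simp: ends_def \<pi>_eq)
  also have "\<dots> = edge_valence G u" by (simp add: edge_valence_def ends_def)
  finally show ?thesis .
qed

lemma sg_iso_by_leg_weight: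
  assumes "sg_iso_by G H \<sigma> \<pi>" "length (leg G) = length A"
  shows "leg_weight A H (\<pi> u) = leg_weight A G u"
proof -
  have \<pi>_eq: "\<pi> a = \<pi> b \<longleftrightarrow> a = b" for a b
    using permutes_inj[of \<pi>] assms(1) by (auto simp: sg_iso_by_def dest: injD)
  have "leg H ! i = \<pi> (leg G ! i)" if "i < length A" for i
    using assms that by (simp add: sg_iso_by_def)
  then show ?thesis
    unfolding leg_weight_def by (intro sum.cong) (auto simp: \<pi>_eq)
qed

lemma stable_graph_iso:
  assumes "sg_iso G H \<sigma>" "stable_graph g A G"
  shows "stable_graph g A H"
proof -
  obtain \<pi> where iso: "sg_iso_by G H \<sigma> \<pi>" using assms(1) sg_iso_iff_by by blast
  note st = assms(2)[unfolded stable_graph_def]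
  have \<pi>: "\<pi> permutes {..<nverts G}" using iso by (simp add: sg_iso_by_def)
  have legs: "leg H ! i < nverts H" if "i < length A" for i
    using iso st that permutes_in_image[OF \<pi>] by (simp add: sg_iso_by_def)
  have ends: "fst (edg H ! j) < nverts H \<and> snd (edg H ! j) < nverts H" if "j < nedges H" for j
  proof -
    have \<sigma>: "\<sigma> permutes {..<nedges G}" and "nedges H = nedges G"
      using iso by (simp_all add: sg_iso_by_def)
    then have k: "inv \<sigma> j < nedges G" "\<sigma> (inv \<sigma> j) = j"
      using that permutes_in_image[OF permutes_inv[OF \<sigma>]] permutes_inverses(1)[OF \<sigma>] by auto
    have "edg H ! j = (\<pi> (fst (edg G ! inv \<sigma> j)), \<pi> (snd (edg G ! inv \<sigma> j))) \<or>
          edg H ! j = (\<pi> (snd (edg G ! inv \<sigma> j)), \<pi> (fst (edg G ! inv \<sigma> j)))"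
      using iso k unfolding sg_iso_by_def by metis
    moreover have "fst (edg G ! inv \<sigma> j) < nverts G" "snd (edg G ! inv \<sigma> j) < nverts G"
      using st k by auto
    ultimately show ?thesis
      using iso permutes_in_image[OF \<pi>] by (auto simp: sg_iso_by_def)
  qed
  have "2 * of_nat (wt H ! v) - 2 + of_nat (edge_valence H v) + leg_weight A H v > (0::rat)"
    if v: "v < nverts H" for v
  proof -
    obtain u where "u < nverts G" "v = \<pi> u" using sg_iso_by_vertex_surj[OF iso v] by blast
    then show ?thesis
      using st iso sg_iso_by_edge_valence[OF iso] sg_iso_by_leg_weight[OF iso]
      by (simp add: sg_iso_by_def)
  qed
  then show ?thesis
    using st iso legs ends sg_iso_by_connected[OF iso] sg_iso_by_sum_wt[OF iso]
    unfolding stable_graph_def by (simp add: sg_iso_by_def betti1_def)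
qed

lemma wsum_permute_list:
  assumes "s permutes {..<length X}" "S \<subseteq> {..<length X}"
  shows "wsum (permute_list s X) S = wsum X (s ` S)"
proof -
  have "wsum (permute_list s X) S = (\<Sum>i\<in>S. X ! s i)"
    unfolding wsum_def using assms by (intro sum.cong) (auto simp: permute_list_nth)
  also have "\<dots> = wsum X (s ` S)"
    unfolding wsum_def using permutes_inj[OF assms(1)] by (simp add: sum.reindex inj_on_subset)
  finally show ?thesis .
qed

lemma chamber_le_permute_list:
  assumes s: "s permutes {..<length X}" and len: "length Y = length X"
    and le: "chamber_le g (permute_list s X) (permute_list s Y)"
  shows "chamber_le g X Y"
  unfolding chamber_le_def
proof (intro allI impI)
  fix T assume wall: "wall_set g (length X) T" and gt: "1 < wsum X T"
  define S where "S = inv s ` T"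
  have T: "T \<subseteq> {..<length X}" using wall by (simp add: wall_set_def)
  have sS: "s ` S = T"
    unfolding S_def image_comp permutes_inv_o(1)[OF s] by simp
  have S: "S \<subseteq> {..<length X}"
    unfolding S_def using T permutes_image[OF permutes_inv[OF s]] by blast
  have "card S = card T"
    unfolding S_def using T permutes_inj[OF permutes_inv[OF s]] by (simp add: card_image inj_on_subset)
  then have "wall_set g (length (permute_list s X)) S"
    using wall S by (simp add: wall_set_def)
  moreover have "1 < wsum (permute_list s X) S"
    using gt wsum_permute_list[OF s S] sS by simp
  ultimately have "1 < wsum (permute_list s Y) S"
    using le by (simp add: chamber_le_def)
  then show "1 < wsum Y T"
    using wsum_permute_list[of s Y S] s S sS len by simp
qed

lemma orbit_le_imp_chamber_le:
  assumes "orbit_le g A B" "length B = length A"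
  obtains \<rho> where "\<rho> permutes {..<length B}" "chamber_le g A (permute_list \<rho> B)"
proof -
  obtain s1 s2 where s1: "s1 permutes {..<length A}" and s2: "s2 permutes {..<length B}"
    and le: "chamber_le g (permute_list s1 A) (permute_list s2 B)"
    using assms(1) unfolding orbit_le_def by blast
  define \<rho> where "\<rho> = s2 \<circ> inv s1"
  have \<rho>: "\<rho> permutes {..<length B}"
    unfolding \<rho>_def using permutes_compose[OF permutes_inv[OF s1]] s2 assms(2) by simp
  have "permute_list s1 (permute_list \<rho> B) = permute_list (\<rho> \<circ> s1) B"
    using permute_list_compose[of s1 B \<rho>] s1 assms(2) by simp
  also have "\<rho> \<circ> s1 = s2"
    unfolding \<rho>_def using permutes_inv_o(2)[OF s1] by (simp add: comp_assoc)
  finally have "chamber_le g (permute_list s1 A) (permute_list s1 (permute_list \<rho> B))"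
    using le by simp
  then have "chamber_le g A (permute_list \<rho> B)"
    using chamber_le_permute_list[OF s1] assms(2) by simp
  with \<rho> show ?thesis using that by blast
qed

lemma weight_datum_permute_list:
  assumes \<rho>: "\<rho> permutes {..<length B}" and wd: "weight_datum g B"
  shows "weight_datum g (permute_list \<rho> B)"
proof -
  have "sum_list (permute_list \<rho> B) = sum_list B"
    using mset_permute_list[OF \<rho>] sum_mset_sum_list by metis
  moreover have "permute_list \<rho> B ! i = B ! \<rho> i \<and> \<rho> i < length B" if "i < length B" for i
    using that \<rho> permutes_in_image[OF \<rho>] by (simp add: permute_list_nth)
  ultimately show ?thesis using wd unfolding weight_datum_def by auto
qed

lemma leg_weight_eq_wsum: "leg_weight A G v = wsum A {i. i < length A \<and> leg G ! i = v}"
  unfolding leg_weight_def wsum_def by (simp add: sum.inter_filter[symmetric])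

lemma wsum_all: "wsum A {..<length A} = sum_list A"
  by (simp add: wsum_def sum_list_sum_nth atLeast0LessThan)

lemma weight_datum_wsum_nonneg:
  assumes "weight_datum g A" "T \<subseteq> {..<length A}"
  shows "0 \<le> wsum A T"
  using assms unfolding weight_datum_def wsum_def by (intro sum_nonneg) (auto simp: less_imp_le)

lemma weight_datum_wsum_pos:
  assumes "weight_datum g A" "T \<subseteq> {..<length A}" "T \<noteq> {}"
  shows "0 < wsum A T"
  using assms finite_subset[OF assms(2)] unfolding weight_datum_def wsum_def
  by (intro sum_pos) auto

lemma weight_datum_wsum_le_card:
  assumes "weight_datum g A" "T \<subseteq> {..<length A}"
  shows "wsum A T \<le> of_nat (card T)"
proof -
  have "wsum A T \<le> (\<Sum>i\<in>T. 1)"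
    using assms unfolding weight_datum_def wsum_def by (intro sum_mono) auto
  then show ?thesis by simp
qed

lemma weight_datum_wsum_ge:
  assumes "weight_datum g A" "T \<subseteq> {..<length A}"
  shows "sum_list A - of_nat (length A - card T) \<le> wsum A T"
proof -
  have "sum_list A = wsum A T + wsum A ({..<length A} - T)"
    using sum.subset_diff[OF assms(2) finite_lessThan, of "\<lambda>i. A ! i"]
    by (simp add: wsum_def sum_list_sum_nth atLeast0LessThan add.commute)
  also have "wsum A ({..<length A} - T) \<le> of_nat (card ({..<length A} - T))"
    using assms(1) by (intro weight_datum_wsum_le_card) auto
  also have "card ({..<length A} - T) = length A - card T"
    using assms(2) finite_subset[OF assms(2)] by (simp add: card_Diff_subset)
  finally show ?thesis by simp
qed

lemma chamber_le_wsum_gt_one: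
  assumes wA: "weight_datum g A" and wB: "weight_datum g B" and len: "length B = length A"
    and le: "chamber_le g A B" and T: "T \<subseteq> {..<length A}" and gt: "1 < wsum A T"
  shows "1 < wsum B T"
proof (cases "wall_set g (length A) T")
  case True
  then show ?thesis using le gt by (simp add: chamber_le_def)
next
  case False
  have "1 < card T" using gt weight_datum_wsum_le_card[OF wA T] by simp
  then have "g = 0" and "length A - card T \<le> 1"
    using False T by (auto simp: wall_set_def)
  moreover have "sum_list B - of_nat (length A - card T) \<le> wsum B T"
    using weight_datum_wsum_ge[OF wB] T len by simp
  moreover have "2 * of_nat g - 2 + sum_list B > 0" using wB by (simp add: weight_datum_def)
  ultimately show ?thesis by (simp add: of_nat_diff)
qed

lemma edge_valence_pos:
  assumes "j < nedges G" "fst (edg G ! j) = v \<or> snd (edg G ! j) = v"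
  shows "0 < edge_valence G v"
proof -
  let ?ends = "\<lambda>j. (if fst (edg G ! j) = v then 1 else 0) + (if snd (edg G ! j) = v then 1 else 0 :: nat)"
  have "0 < ?ends j" using assms(2) by auto
  also have "?ends j \<le> (\<Sum>j<nedges G. ?ends j)"
    using assms(1) by (intro member_le_sum) auto
  finally show ?thesis by (simp add: edge_valence_def)
qed

lemma stable_graph_isolated_vertex:
  assumes st: "stable_graph g A G" and v: "v < nverts G" and iso: "edge_valence G v = 0"
  shows "nverts G = 1" "nedges G = 0" "g = wt G ! v"
proof -
  note st = st[unfolded stable_graph_def]
  show nv: "nverts G = 1"
  proof (rule ccontr)
    assume "nverts G \<noteq> 1"
    then have "2 \<le> nverts G" using v by linarith
    then obtain u where u: "u < nverts G" "u \<noteq> v"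
      by (metis One_nat_def less_2_cases_iff order_less_le_trans zero_neq_one)
    have "(adjacent G)\<^sup>*\<^sup>* v u" using st u v unfolding connected_sg_def by blast
    then obtain w where "adjacent G v w" using u(2) by (metis converse_rtranclpE)
    then have "0 < edge_valence G v"
      unfolding adjacent_def by (auto intro: edge_valence_pos)
    with iso show False by simp
  qed
  show ne: "nedges G = 0"
  proof (rule ccontr)
    assume "nedges G \<noteq> 0"
    moreover have "fst (edg G ! 0) = v" using st nv v calculation by auto
    ultimately have "0 < edge_valence G v" by (intro edge_valence_pos[of 0]) auto
    with iso show False by simp
  qed
  have "sum_list (wt G) = wt G ! v" using nv v by (cases "wt G") (auto simp: nverts_def)
  then show "g = wt G ! v" using st nv ne by (simp add: betti1_def)
qed

lemma stable_vertex_chamber_le: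
  assumes wA: "weight_datum g A" and wB: "weight_datum g B" and len: "length B = length A"
    and le: "chamber_le g A B" and st: "stable_graph g A G" and v: "v < nverts G"
  shows "2 * of_nat (wt G ! v) - 2 + of_nat (edge_valence G v) + leg_weight B G v > (0::rat)"
proof -
  define T where "T = {i. i < length A \<and> leg G ! i = v}"
  define c where "c = 2 * int (wt G ! v) - 2 + int (edge_valence G v)"
  have T: "T \<subseteq> {..<length A}" by (auto simp: T_def)
  have lw: "leg_weight A G v = wsum A T" "leg_weight B G v = wsum B T"
    unfolding T_def leg_weight_eq_wsum len by simp_all
  have "2 * of_nat (wt G ! v) - 2 + of_nat (edge_valence G v) + leg_weight A G v > (0::rat)"
    using st v unfolding stable_graph_def by blast
  then have A_pos: "0 < of_int c + wsum A T" using lw by (simp add: c_def)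
  have "0 < of_int c + wsum B T"
  proof -
    consider "1 \<le> c" | "c = 0" | "c = -1" | "c = -2" unfolding c_def by linarith
    then show ?thesis
    proof cases
      case 1
      then show ?thesis using weight_datum_wsum_nonneg[OF wB, of T] T len by simp
    next
      case 2
      then have "T \<noteq> {}" using A_pos by (auto simp: wsum_def)
      then show ?thesis using weight_datum_wsum_pos[OF wB, of T] T len 2 by simp
    next
      case 3
      then show ?thesis using chamber_le_wsum_gt_one[OF wA wB len le T] A_pos by simp
    next
      case 4
      then have "wt G ! v = 0" "edge_valence G v = 0" unfolding c_def by auto
      note isolated = stable_graph_isolated_vertex[OF st v this(2)]
      have "T = {..<length B}"
        using st isolated(1) v len by (auto simp: T_def stable_graph_def)
      moreover have "2 * of_nat g - 2 + sum_list B > 0" using wB by (simp add: weight_datum_def)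
      ultimately show ?thesis
        using isolated(3) \<open>wt G ! v = 0\<close> 4 by (simp add: wsum_all)
    qed
  qed
  then show ?thesis using lw by (simp add: c_def)
qed

lemma stable_graph_chamber_le:
  assumes "weight_datum g A" "weight_datum g B" "length B = length A" "chamber_le g A B"
    "stable_graph g A G"
  shows "stable_graph g B G"
  using assms stable_vertex_chamber_le[OF assms] unfolding stable_graph_def by simp

lemma leg_weight_relabel_inv:
  assumes \<rho>: "\<rho> permutes {..<length B}" and len: "length (leg G) = length B"
  shows "leg_weight B (relabel (inv \<rho>) G) v = leg_weight (permute_list \<rho> B) G v"
proof -
  let ?f = "\<lambda>i. if leg G ! inv \<rho> i = v then B ! i else 0"
  have "leg_weight B (relabel (inv \<rho>) G) v = sum ?f {..<length B}"
    unfolding leg_weight_def using permutes_inv[OF \<rho>] len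
    by (intro sum.cong) (auto simp: permute_list_nth)
  also have "\<dots> = sum (?f \<circ> \<rho>) {..<length B}" using sum.permute[OF \<rho>] .
  also have "\<dots> = leg_weight (permute_list \<rho> B) G v"
    unfolding leg_weight_def using \<rho> permutes_inverses(2)[OF \<rho>]
    by (intro sum.cong) (auto simp: permute_list_nth)
  finally show ?thesis .
qed

lemma stable_graph_relabel_inv:
  assumes \<rho>: "\<rho> permutes {..<length B}" and st: "stable_graph g (permute_list \<rho> B) G"
  shows "stable_graph g B (relabel (inv \<rho>) G)"
proof -
  have len: "length (leg G) = length B" using st by (simp add: stable_graph_def)
  have "permute_list (inv \<rho>) (leg G) ! i < nverts G" if "i < length B" for i
    using that st len permutes_inv[OF \<rho>] permutes_in_image[OF permutes_inv[OF \<rho>]]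
    by (simp add: permute_list_nth stable_graph_def)
  then show ?thesis
    using st len leg_weight_relabel_inv[OF \<rho> len] unfolding stable_graph_def by simp
qed

lemma push_relabel:
  assumes \<tau>: "\<tau> permutes {..<n}" and legs: "\<And>x. f x \<noteq> 0 \<Longrightarrow> length (leg x) = n"
  shows "push (relabel \<tau>) f y = (if length (leg y) = n then f (relabel (inv \<tau>) y) else 0)"
proof -
  have "{x. f x \<noteq> 0 \<and> relabel \<tau> x = y} =
        (if length (leg y) = n \<and> f (relabel (inv \<tau>) y) \<noteq> 0 then {relabel (inv \<tau>) y} else {})"
    using relabel_eq_iff[OF \<tau>] relabel_inv_relabel[OF \<tau>] legs by auto
  then show ?thesis unfolding push_def by auto
qed

lemma delta_relabel:
  assumes "\<tau> permutes {..<n}" "length (leg x) = n"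
  shows "delta (relabel \<tau> x) y = (if length (leg y) = n then delta x (relabel (inv \<tau>) y) else 0)"
  using relabel_eq_iff[OF assms, of y] by (auto simp: delta_def)

lemma rel_space_relabel:
  assumes \<tau>: "\<tau> permutes {..<n}" and len: "length A = n"
    and stable: "\<And>G. stable_graph g A G \<Longrightarrow> stable_graph g B (relabel \<tau> G)"
    and f: "f \<in> rel_space g A"
  shows "(\<lambda>y. if length (leg y) = n then f (relabel (inv \<tau>) y) else 0) \<in> rel_space g B"
  using f
proof (induction rule: rel_space.induct)
  case zero
  then show ?case by (simp add: rel_space.zero)
next
  case (step f x y \<sigma> c)
  have legs: "length (leg x) = n" "length (leg y) = n"
    using step.hyps len by (auto simp: stable_graph_def)
  have "(\<lambda>z. (if length (leg z) = n then f (relabel (inv \<tau>) z) else 0) +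
          c * (delta (relabel \<tau> x) z - of_int (sign \<sigma>) * delta (relabel \<tau> y) z)) \<in> rel_space g B"
    using step.IH stable step.hyps sg_iso_relabel[OF _ \<tau> legs(1)] by (intro rel_space.step) auto
  then show ?case
    by (rule back_subst[where P = "\<lambda>F. F \<in> rel_space g B"])
      (auto simp: fun_eq_iff delta_relabel[OF \<tau> legs(1)] delta_relabel[OF \<tau> legs(2)])
qed

lemma rel_space_unrelabel:
  assumes \<tau>: "\<tau> permutes {..<n}" and lenA: "length A = n" and lenB: "length B = n"
    and F: "F \<in> rel_space g B"
  shows "(\<lambda>z. if stable_graph g A z then F (relabel \<tau> z) else 0) \<in> rel_space g A"
  using F
proof (induction rule: rel_space.induct)
  case zero
  then show ?case by (simp add: rel_space.zero)
next
  case (step F x y \<sigma> c)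
  define x' y' where "x' = relabel (inv \<tau>) x" and "y' = relabel (inv \<tau>) y"
  have legs: "length (leg x) = n" "length (leg y) = n"
    using step.hyps lenB by (auto simp: stable_graph_def)
  have pull_delta: "(if stable_graph g A z then delta u (relabel \<tau> z) else 0) =
      (if stable_graph g A (relabel (inv \<tau>) u) then delta (relabel (inv \<tau>) u) z else 0)"
    if "length (leg u) = n" for u z
  proof (cases "stable_graph g A z")
    case True
    then have "length (leg z) = n" using lenA by (simp add: stable_graph_def)
    from relabel_eq_iff[OF \<tau> this, of u] show ?thesis using True that by (auto simp: delta_def)
  qed (auto simp: delta_def)
  have iso: "sg_iso x' y' \<sigma>"
    unfolding x'_def y'_def using sg_iso_relabel[OF step.hyps(4) permutes_inv[OF \<tau>]] legs by simp
  have stable_iff: "stable_graph g A x' \<longleftrightarrow> stable_graph g A y'"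
    using stable_graph_iso[OF iso] stable_graph_iso[OF sg_iso_sym[OF iso]] by blast
  have "(\<lambda>z. if stable_graph g A z then F (relabel \<tau> z) + c * (delta x (relabel \<tau> z)
            - of_int (sign \<sigma>) * delta y (relabel \<tau> z)) else 0)
      = (\<lambda>z. (if stable_graph g A z then F (relabel \<tau> z) else 0)
            + c * ((if stable_graph g A z then delta x (relabel \<tau> z) else 0)
                   - of_int (sign \<sigma>) * (if stable_graph g A z then delta y (relabel \<tau> z) else 0)))"
    by (simp add: fun_eq_iff)
  also have "\<dots> = (\<lambda>z. (if stable_graph g A z then F (relabel \<tau> z) else 0)
            + c * ((if stable_graph g A x' then delta x' z else 0)
                   - of_int (sign \<sigma>) * (if stable_graph g A y' then delta y' z else 0)))"
    unfolding pull_delta[OF legs(1)] pull_delta[OF legs(2)] x'_def y'_def ..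
  finally show ?case
    using step.IH rel_space.step[OF step.IH _ _ iso] stable_iff
    by (cases "stable_graph g A x'") auto
qed

definition diff_coeff :: "sgraph \<Rightarrow> sgraph \<Rightarrow> rat" where
  "diff_coeff x y =
     (\<Sum>j | j < nedges x \<and> fst (edg x ! j) \<noteq> snd (edg x ! j) \<and> contract x j = y. (-1) ^ j)"

lemma diff_eq_sum_diff_coeff: "diff f y = (\<Sum>x | f x \<noteq> 0. f x * diff_coeff x y)"
  by (simp add: diff_def diff_coeff_def)

lemma diff_coeff_eq_0:
  assumes "length (leg y) \<noteq> length (leg x)"
  shows "diff_coeff x y = 0"
proof -
  have "contract x j \<noteq> y" for j using assms by auto
  then show ?thesis by (simp add: diff_coeff_def)
qed

lemma diff_coeff_relabel:
  assumes \<tau>: "\<tau> permutes {..<n}" and len: "length (leg x) = n"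
  shows "diff_coeff (relabel \<tau> x) y =
    (if length (leg y) = n then diff_coeff x (relabel (inv \<tau>) y) else 0)"
proof (cases "length (leg y) = n")
  case True
  have "contract (relabel \<tau> x) j = y \<longleftrightarrow> contract x j = relabel (inv \<tau>) y" for j
    using relabel_eq_iff[OF \<tau>, of "contract x j" y] contract_relabel[OF \<tau> len] len True by simp
  then show ?thesis using True by (simp add: diff_coeff_def)
qed (use diff_coeff_eq_0 len in simp)

lemma diff_support_length_leg:
  assumes legs: "\<And>x. f x \<noteq> 0 \<Longrightarrow> length (leg x) = n" and nz: "diff f y \<noteq> 0"
  shows "length (leg y) = n"
proof (rule ccontr)
  assume "length (leg y) \<noteq> n"
  then have "diff_coeff x y = 0" if "f x \<noteq> 0" for x
    using diff_coeff_eq_0 legs[OF that] by simp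
  then have "diff f y = 0" by (simp add: diff_eq_sum_diff_coeff)
  with nz show False by contradiction
qed

lemma inj_on_relabel:
  assumes "\<tau> permutes {..<n}"
  shows "inj_on (relabel \<tau>) {G. length (leg G) = n}"
  using relabel_inv_relabel[OF assms] by (intro inj_on_inverseI) simp

lemma push_relabel_support:
  assumes \<tau>: "\<tau> permutes {..<n}" and legs: "\<And>x. f x \<noteq> 0 \<Longrightarrow> length (leg x) = n"
  shows "{y. push (relabel \<tau>) f y \<noteq> 0} = relabel \<tau> ` {x. f x \<noteq> 0}"
proof (intro set_eqI iffI)
  fix y assume "y \<in> {y. push (relabel \<tau>) f y \<noteq> 0}"
  then have "length (leg y) = n" "f (relabel (inv \<tau>) y) \<noteq> 0"
    by (auto simp: push_relabel[where f = f, OF \<tau> legs] split: if_splits)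
  then have "y = relabel \<tau> (relabel (inv \<tau>) y)" using relabel_relabel_inv[OF \<tau>] by simp
  with \<open>f (relabel (inv \<tau>) y) \<noteq> 0\<close> show "y \<in> relabel \<tau> ` {x. f x \<noteq> 0}" by blast
next
  fix y assume "y \<in> relabel \<tau> ` {x. f x \<noteq> 0}"
  then obtain x where x: "f x \<noteq> 0" "y = relabel \<tau> x" by blast
  then show "y \<in> {y. push (relabel \<tau>) f y \<noteq> 0}"
    using legs[OF x(1)] relabel_inv_relabel[OF \<tau>] by (simp add: push_relabel[where f = f, OF \<tau> legs])
qed

lemma push_relabel_diff:
  assumes \<tau>: "\<tau> permutes {..<n}" and legs: "\<And>x. f x \<noteq> 0 \<Longrightarrow> length (leg x) = n"
  shows "push (relabel \<tau>) (diff f) = diff (push (relabel \<tau>) f)"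
proof
  fix y
  define S where "S = {x. f x \<noteq> 0}"
  have inj: "inj_on (relabel \<tau>) S"
    by (rule inj_on_subset[OF inj_on_relabel[OF \<tau>]]) (auto simp: S_def legs)
  have supp: "{z. push (relabel \<tau>) f z \<noteq> 0} = relabel \<tau> ` S"
    unfolding S_def by (rule push_relabel_support[OF \<tau> legs])
  have "diff (push (relabel \<tau>) f) y =
      (\<Sum>x\<in>S. push (relabel \<tau>) f (relabel \<tau> x) * diff_coeff (relabel \<tau> x) y)"
    unfolding diff_eq_sum_diff_coeff supp using inj by (simp add: sum.reindex)
  also have "\<dots> = (\<Sum>x\<in>S. f x * (if length (leg y) = n then diff_coeff x (relabel (inv \<tau>) y) else 0))"
    using legs relabel_inv_relabel[OF \<tau>]
    by (intro sum.cong refl) (simp add: push_relabel[where f = f, OF \<tau> legs] diff_coeff_relabel[OF \<tau>] S_def)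
  also have "\<dots> = push (relabel \<tau>) (diff f) y"
  proof -
    have "\<And>z. diff f z \<noteq> 0 \<Longrightarrow> length (leg z) = n"
      using diff_support_length_leg[of f n] legs by blast
    from push_relabel[where f = "diff f", OF \<tau> this] show ?thesis
      by (simp add: diff_eq_sum_diff_coeff S_def)
  qed
  finally show "push (relabel \<tau>) (diff f) y = diff (push (relabel \<tau>) f) y" by simp
qed

lemma injective_chain_map_relabel:
  assumes \<tau>: "\<tau> permutes {..<n}" and lenA: "length A = n" and lenB: "length B = n"
    and stable: "\<And>G. stable_graph g A G \<Longrightarrow> stable_graph g B (relabel \<tau> G)"
  shows "injective_chain_map g A B (relabel \<tau>)"
proof -
  have legs: "\<And>x. f x \<noteq> 0 \<Longrightarrow> length (leg x) = n" if "f \<in> free_space g A" for f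
    using that lenA by (auto simp: free_space_def stable_graph_def)
  have preserves: "push (relabel \<tau>) f \<in> rel_space g B"
    if f: "f \<in> free_space g A" and rel: "f \<in> rel_space g A" for f
  proof -
    from push_relabel[OF \<tau> legs[OF f]] have
      "push (relabel \<tau>) f = (\<lambda>y. if length (leg y) = n then f (relabel (inv \<tau>) y) else 0)"
      by (rule ext)
    then show ?thesis using rel_space_relabel[OF \<tau> lenA stable rel] by simp
  qed
  have reflects: "f \<in> rel_space g A"
    if f: "f \<in> free_space g A" and push: "push (relabel \<tau>) f \<in> rel_space g B" for f
  proof -
    have "(if stable_graph g A z then push (relabel \<tau>) f (relabel \<tau> z) else 0) = f z" for z
      using f lenA push_relabel[OF \<tau> legs[OF f]] relabel_inv_relabel[OF \<tau>]
      by (auto simp: free_space_def stable_graph_def)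
    then show ?thesis using rel_space_unrelabel[OF \<tau> lenA lenB push] by simp
  qed
  have commutes: "(\<lambda>y. push (relabel \<tau>) (diff f) y - diff (push (relabel \<tau>) f) y) \<in> rel_space g B"
    if "f \<in> free_space g A" for f
    using push_relabel_diff[OF \<tau> legs[OF that]] rel_space.zero by simp
  show ?thesis
    unfolding injective_chain_map_def using stable preserves reflects commutes by simp
qed

lemma orbit_le_injective_chain_map:
  assumes wA: "weight_datum g A" and wB: "weight_datum g B" and len: "length B = length A"
    and le: "orbit_le g A B"
  obtains \<tau> where "\<tau> permutes {..<length A}" "injective_chain_map g A B (relabel \<tau>)"
proof -
  obtain \<rho> where \<rho>: "\<rho> permutes {..<length B}" and le': "chamber_le g A (permute_list \<rho> B)"
    using orbit_le_imp_chamber_le[OF le len] by blast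
  have "stable_graph g B (relabel (inv \<rho>) G)" if "stable_graph g A G" for G
    using stable_graph_chamber_le[OF wA weight_datum_permute_list[OF \<rho> wB] _ le' that]
      stable_graph_relabel_inv[OF \<rho>] len by simp
  then have "injective_chain_map g A B (relabel (inv \<rho>))"
    using injective_chain_map_relabel[OF permutes_inv[OF \<rho>]] len by simp
  with that show ?thesis using permutes_inv[OF \<rho>] len by simp
qed

theorem mainTheorem8:
  fixes g N :: nat and A :: "rat list" and As :: "nat \<Rightarrow> rat list"
  assumes "1 \<le> length A"
    and "weight_datum g A"
    and "1 \<le> N" and "As N = A"
    and "\<forall>p\<in>{1..N}. length (As p) = length A \<and> in_chamber g (As p)"
    and "\<forall>p\<in>{2..N}. orbit_le g (As (p - 1)) (As p)"
  shows "\<forall>p\<in>{2..N}. \<exists>\<tau>. \<tau> permutes {..<length A} \<and>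
           injective_chain_map g (As (p - 1)) (As p) (relabel \<tau>)"
proof
  \<comment> \<open>only that the \<open>A\<^sub>p\<close> are weight data is used, not that they avoid the walls\<close>
  fix p assume p: "p \<in> {2..N}"
  then have "p - 1 \<in> {1..N}" "p \<in> {1..N}" by auto
  then have "weight_datum g (As (p - 1))" "weight_datum g (As p)"
    and "length (As (p - 1)) = length A" "length (As p) = length A"
    using assms(5) by (auto simp: in_chamber_def)
  moreover have "orbit_le g (As (p - 1)) (As p)" using assms(6) p by blast
  ultimately obtain \<tau> where "\<tau> permutes {..<length (As (p - 1))}"
      "injective_chain_map g (As (p - 1)) (As p) (relabel \<tau>)"
    using orbit_le_injective_chain_map by metis
  then show "\<exists>\<tau>. \<tau> permutes {..<length A} \<and>
      injective_chain_map g (As (p - 1)) (As p) (relabel \<tau>)"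
    using \<open>length (As (p - 1)) = length A\<close> by auto
qed

end
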